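(* Let $\rho$ be a two-qubit state whose reduced state on qubit $A$ is maximally mixed, i.e. $\vec{x}=0$ where $x_i=\mathrm{Tr}[\rho(\sigma_i\otimes\mathbb{1})]$. Let $y_j=\mathrm{Tr}[\rho(\mathbb{1}\otimes\sigma_j)]$, $T_{ij}=\mathrm{Tr}[\rho(\sigma_i\otimes\sigma_j)]$ and $Y=\vec{y}^{\,T}\vec{y}$ (the $3\times 3$ matrix with entries $y_iy_j$). Then $$G(\rho)=\tfrac14\big[|\vec{y}|^2+\|T\|^2-\kappa\big],$$ where $\|T\|^2=\sum_{i,j}T_{ij}^2$ and $\kappa$ is the largest eigenvalue of $T^TT+Y$.
   Context: $\sigma_i$ are the Pauli matrices. The Hilbert–Schmidt distance is $D(M,N)=\sqrt{\mathrm{Tr}[(M-N)(M-N)^\dagger]}$. For unit vectors $\vec{k},\vec{\ell}\in\mathbb{R}^3$ let $\Pi^A_\pm=\frac12(\mathbb{1}\pm\vec{k}\cdot\vec{\sigma})$, $\Pi^B_\pm=\frac12(\mathbb{1}\pm\vec{\ell}\cdot\vec{\sigma})$, and $\chi_{\vec{k},\vec{\ell}}=\sum_{i,j=\pm}(\Pi^A_i\otimes\Pi^B_j)\rho(\Pi^A_i\otimes\Pi^B_j)$. The symmetric geometric measure is $G(\rho)=\min_{\vec{k},\vec{\ell}}D^2(\rho,\chi_{\vec{k},\vec{\ell}})$ over unit vectors. *)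

theory Defs
  imports "Jordan_Normal_Form.Schur_Decomposition" "Jordan_Normal_Form.Char_Poly"
begin

(* Pauli matrices: pauli 0 = sigma_1 (X), pauli 1 = sigma_2 (Y), pauli 2 = sigma_3 (Z) *)
definition pauli :: "nat \<Rightarrow> complex mat" where
  "pauli i = (if i = 0 then mat_of_rows_list 2 [[0, 1], [1, 0]]
              else if i = 1 then mat_of_rows_list 2 [[0, -\<i>], [\<i>, 0]]
              else mat_of_rows_list 2 [[1, 0], [0, -1]])"

(* Kronecker (tensor) product; qubit A is the first factor *)
definition tensor :: "complex mat \<Rightarrow> complex mat \<Rightarrow> complex mat" (infixl "\<otimes>\<^sub>k" 70) where
  "A \<otimes>\<^sub>k B = mat (dim_row A * dim_row B) (dim_col A * dim_col B)
      (\<lambda>(r, c). A $$ (r div dim_row B, c div dim_col B) * B $$ (r mod dim_row B, c mod dim_col B))"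

definition ctrace :: "complex mat \<Rightarrow> complex" where
  "ctrace A = (\<Sum>i<dim_row A. A $$ (i, i))"

definition two_qubit_state :: "complex mat \<Rightarrow> bool" where
  "two_qubit_state \<rho> \<longleftrightarrow> \<rho> \<in> carrier_mat 4 4 \<and> mat_adjoint \<rho> = \<rho> \<and> ctrace \<rho> = 1 \<and>
     (\<forall>v \<in> carrier_vec 4. 0 \<le> Re (\<Sum>i<4. cnj (v $ i) * (\<rho> *\<^sub>v v) $ i))"

definition hs_dist :: "complex mat \<Rightarrow> complex mat \<Rightarrow> real" where
  "hs_dist M N = sqrt (Re (ctrace ((M - N) * mat_adjoint (M - N))))"

definition unit3 :: "real vec \<Rightarrow> bool" where
  "unit3 k \<longleftrightarrow> k \<in> carrier_vec 3 \<and> (\<Sum>i<3. (k $ i)^2) = 1"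

definition bloch_op :: "real vec \<Rightarrow> complex mat" where
  "bloch_op k = complex_of_real (k $ 0) \<cdot>\<^sub>m pauli 0 + complex_of_real (k $ 1) \<cdot>\<^sub>m pauli 1
               + complex_of_real (k $ 2) \<cdot>\<^sub>m pauli 2"

definition proj :: "real vec \<Rightarrow> real \<Rightarrow> complex mat" where
  "proj k s = (1/2 :: complex) \<cdot>\<^sub>m (1\<^sub>m 2 + complex_of_real s \<cdot>\<^sub>m bloch_op k)"

definition chi :: "complex mat \<Rightarrow> real vec \<Rightarrow> real vec \<Rightarrow> complex mat" where
  "chi \<rho> k l =
     (let P = (\<lambda>s t. proj k s \<otimes>\<^sub>k proj l t) in
        P 1 1 * \<rho> * P 1 1 + P 1 (-1) * \<rho> * P 1 (-1)
      + P (-1) 1 * \<rho> * P (-1) 1 + P (-1) (-1) * \<rho> * P (-1) (-1))"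

definition geom_G :: "complex mat \<Rightarrow> real" where
  "geom_G \<rho> = Inf {(hs_dist \<rho> (chi \<rho> k l))^2 | k l. unit3 k \<and> unit3 l}"

(* Bloch data, indices 0,1,2 correspond to 1,2,3 *)
definition loc_x :: "complex mat \<Rightarrow> nat \<Rightarrow> real" where
  "loc_x \<rho> i = Re (ctrace (\<rho> * (pauli i \<otimes>\<^sub>k 1\<^sub>m 2)))"

definition loc_y :: "complex mat \<Rightarrow> nat \<Rightarrow> real" where
  "loc_y \<rho> j = Re (ctrace (\<rho> * (1\<^sub>m 2 \<otimes>\<^sub>k pauli j)))"

definition corr :: "complex mat \<Rightarrow> nat \<Rightarrow> nat \<Rightarrow> real" where
  "corr \<rho> i j = Re (ctrace (\<rho> * (pauli i \<otimes>\<^sub>k pauli j)))"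

definition corr_mat :: "complex mat \<Rightarrow> real mat" where
  "corr_mat \<rho> = mat 3 3 (\<lambda>(i, j). corr \<rho> i j)"

definition Y_mat :: "complex mat \<Rightarrow> real mat" where
  "Y_mat \<rho> = mat 3 3 (\<lambda>(i, j). loc_y \<rho> i * loc_y \<rho> j)"

definition largest_eigenvalue :: "real mat \<Rightarrow> real" where
  "largest_eigenvalue M = Max {k. eigenvalue M k}"

end

theory Submission
  imports Defs "HOL-Analysis.Convex" "HOL-Analysis.Elementary_Metric_Spaces"
begin

text \<open>The sixteen products \<open>\<tau>\<^sub>a \<otimes> \<tau>\<^sub>b\<close> with \<open>\<tau>\<^sub>0 = 1\<close>, \<open>\<tau>\<^sub>i = \<sigma>\<^sub>i\<close> form an orthogonal
  basis, so \<open>D\<^sup>2(\<rho>, \<chi>)\<close> is a quarter of the sum of the squared coefficients of \<open>\<rho> - \<chi>\<close>. By cyclicity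
  of the trace, the coefficients of \<open>\<chi>\<^sub>k\<^sub>,\<^sub>l\<close> are those of \<open>\<rho>\<close> against the locally dephased observables,
  and dephasing along \<open>k\<close> sends \<open>1\<close> to \<open>1\<close> and \<open>\<sigma>\<^sub>i\<close> to \<open>k\<^sub>i (k \<cdot> \<sigma>)\<close>. Hence \<open>\<chi>\<close> keeps exactly the
  projections of \<open>x\<close>, \<open>y\<close>, \<open>T\<close> onto \<open>k\<close>, \<open>l\<close>, \<open>k l\<^sup>T\<close>, and
  \<open>4 D\<^sup>2 = |x|\<^sup>2 - (k\<cdot>x)\<^sup>2 + |y|\<^sup>2 - (l\<cdot>y)\<^sup>2 + \<parallel>T\<parallel>\<^sup>2 - (k\<^sup>T T l)\<^sup>2\<close>.
  When \<open>x = 0\<close> one maximises \<open>(l\<cdot>y)\<^sup>2 + (k\<^sup>T T l)\<^sup>2\<close>: over \<open>k\<close> this gives \<open>l\<^sup>T (T\<^sup>T T + Y) l\<close> by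
  Cauchy-Schwarz, and over unit \<open>l\<close> the largest eigenvalue by the Rayleigh principle.\<close>

lemma nat_less_2_iff: "(i::nat) < 2 \<longleftrightarrow> i = 0 \<or> i = 1" by auto
lemma nat_less_3_iff: "(i::nat) < 3 \<longleftrightarrow> i = 0 \<or> i = 1 \<or> i = 2" by auto
lemma nat_less_4_iff: "(i::nat) < 4 \<longleftrightarrow> i = 0 \<or> i = 1 \<or> i = 2 \<or> i = 3" by auto

lemma sum_lessThan_2: "(\<Sum>i<(2::nat). f i) = f 0 + (f 1 :: 'a::comm_monoid_add)"
  by (simp add: eval_nat_numeral)
lemma sum_lessThan_3: "(\<Sum>i<(3::nat). f i) = f 0 + f 1 + (f 2 :: 'a::comm_monoid_add)"
  by (simp add: eval_nat_numeral)
lemma sum_lessThan_4: "(\<Sum>i<(4::nat). f i) = f 0 + f 1 + f 2 + (f 3 :: 'a::comm_monoid_add)"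
  by (simp add: eval_nat_numeral)
lemma sum_lessThan_4_shift: "(\<Sum>m<(4::nat). f m) = f 0 + (\<Sum>a<3. f (Suc a))"
  using sum.lessThan_Suc_shift[of f 3] by (simp add: eval_nat_numeral)

lemma pauli_dim [simp]: "dim_row (pauli i) = 2" "dim_col (pauli i) = 2"
  by (simp_all add: pauli_def mat_of_rows_list_def)

lemma pauli_carrier [simp]: "pauli i \<in> carrier_mat 2 2"
  by (intro carrier_matI) simp_all

lemma pauli_entries:
  "pauli 0 $$ (0,0) = 0" "pauli 0 $$ (0,1) = 1" "pauli 0 $$ (1,0) = 1" "pauli 0 $$ (1,1) = 0"
  "pauli 1 $$ (0,0) = 0" "pauli 1 $$ (0,1) = -\<i>" "pauli 1 $$ (1,0) = \<i>" "pauli 1 $$ (1,1) = 0"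
  "pauli 2 $$ (0,0) = 1" "pauli 2 $$ (0,1) = 0" "pauli 2 $$ (1,0) = 0" "pauli 2 $$ (1,1) = -1"
  by (simp_all add: pauli_def mat_of_rows_list_def)

lemma tensor_dim [simp]:
  "dim_row (A \<otimes>\<^sub>k B) = dim_row A * dim_row B" "dim_col (A \<otimes>\<^sub>k B) = dim_col A * dim_col B"
  by (simp_all add: tensor_def)

lemma index_tensor [simp]:
  "i < dim_row A * dim_row B \<Longrightarrow> j < dim_col A * dim_col B \<Longrightarrow>
   (A \<otimes>\<^sub>k B) $$ (i,j) = A $$ (i div dim_row B, j div dim_col B) * B $$ (i mod dim_row B, j mod dim_col B)"
  by (simp add: tensor_def)

lemma tensor_carrier [simp]:
  "A \<in> carrier_mat 2 2 \<Longrightarrow> B \<in> carrier_mat 2 2 \<Longrightarrow> A \<otimes>\<^sub>k B \<in> carrier_mat 4 4"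
  by (intro carrier_matI) (auto dest!: carrier_matD)

lemma mult_carrier_mat_2 [simp]: "A \<in> carrier_mat 2 2 \<Longrightarrow> B \<in> carrier_mat 2 2 \<Longrightarrow> A * B \<in> carrier_mat 2 2"
  by (rule mult_carrier_mat)

lemma mult_carrier_mat_4 [simp]: "A \<in> carrier_mat 4 4 \<Longrightarrow> B \<in> carrier_mat 4 4 \<Longrightarrow> A * B \<in> carrier_mat 4 4"
  by (rule mult_carrier_mat)

lemma index_mult_mat_4:
  "A \<in> carrier_mat 4 4 \<Longrightarrow> B \<in> carrier_mat 4 4 \<Longrightarrow> i < 4 \<Longrightarrow> j < 4 \<Longrightarrow>
   (A * B) $$ (i,j) = A$$(i,0)*B$$(0,j) + A$$(i,1)*B$$(1,j) + A$$(i,2)*B$$(2,j) + A$$(i,3)*B$$(3,j)"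
  by (simp add: scalar_prod_def atLeast0LessThan sum_lessThan_4)

lemma tensor_mult:
  assumes "A \<in> carrier_mat 2 2" "B \<in> carrier_mat 2 2" "C \<in> carrier_mat 2 2" "D \<in> carrier_mat 2 2"
  shows "(A \<otimes>\<^sub>k B) * (C \<otimes>\<^sub>k D) = (A * C) \<otimes>\<^sub>k (B * D)"
proof (rule eq_matI)
  have dims: "dim_row A = 2" "dim_col A = 2" "dim_row B = 2" "dim_col B = 2"
    "dim_row C = 2" "dim_col C = 2" "dim_row D = 2" "dim_col D = 2"
    using assms by auto
  fix i j assume "i < dim_row ((A * C) \<otimes>\<^sub>k (B * D))" "j < dim_col ((A * C) \<otimes>\<^sub>k (B * D))"
  then have ij: "i < 4" "j < 4" using dims by auto
  then show "((A \<otimes>\<^sub>k B) * (C \<otimes>\<^sub>k D)) $$ (i,j) = ((A * C) \<otimes>\<^sub>k (B * D)) $$ (i,j)"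
    using assms unfolding index_mult_mat_4[OF tensor_carrier tensor_carrier ij, OF assms] nat_less_4_iff
    by (elim disjE) (simp_all add: dims scalar_prod_def atLeast0LessThan sum_lessThan_2 algebra_simps)
qed (use assms in auto)

lemma one_tensor_one: "1\<^sub>m 2 \<otimes>\<^sub>k 1\<^sub>m 2 = (1\<^sub>m 4 :: complex mat)"
proof (rule eq_matI)
  fix i j assume "i < dim_row (1\<^sub>m 4 :: complex mat)" "j < dim_col (1\<^sub>m 4 :: complex mat)"
  then have "i < 4" "j < 4" by auto
  then show "(1\<^sub>m 2 \<otimes>\<^sub>k 1\<^sub>m 2) $$ (i, j) = (1\<^sub>m 4 :: complex mat) $$ (i, j)"
    unfolding nat_less_4_iff by (elim disjE) simp_all
qed auto

lemma index_mat_adjoint: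
  "i < dim_col A \<Longrightarrow> j < dim_row A \<Longrightarrow> mat_adjoint A $$ (i,j) = cnj (A $$ (j,i))"
  by (simp add: mat_adjoint_def mat_of_rows_def)

lemma mat_adjoint_dim [simp]:
  "dim_row (mat_adjoint A) = dim_col A" "dim_col (mat_adjoint A) = dim_row A"
  by (simp_all add: mat_adjoint_def)

lemma mat_adjoint_carrier [simp]: "A \<in> carrier_mat n m \<Longrightarrow> mat_adjoint A \<in> carrier_mat m n"
  by (intro carrier_matI) auto

lemma mat_adjoint_tensor:
  assumes "X \<in> carrier_mat 2 2" "Y \<in> carrier_mat 2 2"
  shows "mat_adjoint (X \<otimes>\<^sub>k Y) = mat_adjoint X \<otimes>\<^sub>k mat_adjoint Y"
proof (rule eq_matI)
  have dims: "dim_row X = 2" "dim_col X = 2" "dim_row Y = 2" "dim_col Y = 2" using assms by auto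
  fix i j assume "i < dim_row (mat_adjoint X \<otimes>\<^sub>k mat_adjoint Y)" "j < dim_col (mat_adjoint X \<otimes>\<^sub>k mat_adjoint Y)"
  then have "i < 4" "j < 4" using dims by auto
  then show "mat_adjoint (X \<otimes>\<^sub>k Y) $$ (i, j) = (mat_adjoint X \<otimes>\<^sub>k mat_adjoint Y) $$ (i, j)"
    unfolding nat_less_4_iff by (elim disjE) (simp_all add: index_mat_adjoint dims)
qed (use assms in auto)

lemma hermitian_entry:
  assumes "mat_adjoint A = A" "A \<in> carrier_mat n n" "i < n" "j < n"
  shows "A $$ (i,j) = cnj (A $$ (j,i))"
  using assms index_mat_adjoint[of i A j] by auto

lemma ctrace_mult:
  assumes "A \<in> carrier_mat n m" "B \<in> carrier_mat m n"
  shows "ctrace (A * B) = (\<Sum>i<n. \<Sum>j<m. A$$(i,j) * B$$(j,i))"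
  using assms unfolding ctrace_def by (simp add: scalar_prod_def atLeast0LessThan)

lemma ctrace_mult_comm:
  assumes "A \<in> carrier_mat n m" "B \<in> carrier_mat m n"
  shows "ctrace (A * B) = ctrace (B * A)"
  by (simp add: ctrace_mult[OF assms] ctrace_mult[OF assms(2,1)] sum.swap[of _ "{..<n}"] mult.commute)

lemma ctrace_add:
  "A \<in> carrier_mat n n \<Longrightarrow> B \<in> carrier_mat n n \<Longrightarrow> ctrace (A + B) = ctrace A + ctrace B"
  unfolding ctrace_def by (simp add: sum.distrib)

lemma ctrace_diff:
  "A \<in> carrier_mat n n \<Longrightarrow> B \<in> carrier_mat n n \<Longrightarrow> ctrace (A - B) = ctrace A - ctrace B"
  unfolding ctrace_def by (simp add: sum_subtractf)

lemma ctrace_sandwich: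
  assumes "P \<in> carrier_mat n n" "R \<in> carrier_mat n n" "B \<in> carrier_mat n n"
  shows "ctrace (P * R * P * B) = ctrace (R * (P * B * P))"
proof -
  have "ctrace (P * R * P * B) = ctrace ((P * R) * (P * B))"
    using assms by (simp add: assoc_mult_mat[of _ n n _ n _ n])
  also have "\<dots> = ctrace ((P * B) * (P * R))" using assms by (intro ctrace_mult_comm) auto
  also have "\<dots> = ctrace ((P * B * P) * R)" using assms by (simp add: assoc_mult_mat[of _ n n _ n _ n])
  also have "\<dots> = ctrace (R * (P * B * P))" using assms by (intro ctrace_mult_comm) auto
  finally show ?thesis .
qed

lemma ctrace_mult_hermitian_real:
  assumes A: "A \<in> carrier_mat n n" and B: "B \<in> carrier_mat n n"
    and "mat_adjoint A = A" "mat_adjoint B = B"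
  shows "cnj (ctrace (A * B)) = ctrace (A * B)"
proof -
  have "cnj (ctrace (A * B)) = (\<Sum>i<n. \<Sum>j<n. cnj (A$$(i,j)) * cnj (B$$(j,i)))"
    by (simp add: ctrace_mult[OF A B])
  also have "\<dots> = (\<Sum>i<n. \<Sum>j<n. A$$(j,i) * B$$(i,j))"
    by (intro sum.cong refl) (metis assms hermitian_entry lessThan_iff complex_cnj_cnj)
  also have "\<dots> = ctrace (B * A)" by (simp add: ctrace_mult[OF B A] mult.commute)
  also have "\<dots> = ctrace (A * B)" using ctrace_mult_comm[OF A B] by simp
  finally show ?thesis .
qed

section \<open>Expansion in the Pauli product basis\<close>

definition pauli_basis :: "nat \<Rightarrow> complex mat" where
  "pauli_basis m = (if m = 0 then 1\<^sub>m 2 else pauli (m - 1))"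

lemma pauli_basis_carrier [simp]: "pauli_basis m \<in> carrier_mat 2 2"
  by (simp add: pauli_basis_def)

lemma pauli_basis_dim [simp]: "dim_row (pauli_basis m) = 2" "dim_col (pauli_basis m) = 2"
  by (simp_all add: pauli_basis_def)

lemma pauli_basis_entries:
  "pauli_basis 0 $$ (0,0) = 1" "pauli_basis 0 $$ (0,1) = 0" "pauli_basis 0 $$ (1,0) = 0" "pauli_basis 0 $$ (1,1) = 1"
  "pauli_basis 1 $$ (0,0) = 0" "pauli_basis 1 $$ (0,1) = 1" "pauli_basis 1 $$ (1,0) = 1" "pauli_basis 1 $$ (1,1) = 0"
  "pauli_basis 2 $$ (0,0) = 0" "pauli_basis 2 $$ (0,1) = -\<i>" "pauli_basis 2 $$ (1,0) = \<i>" "pauli_basis 2 $$ (1,1) = 0"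
  "pauli_basis 3 $$ (0,0) = 1" "pauli_basis 3 $$ (0,1) = 0" "pauli_basis 3 $$ (1,0) = 0" "pauli_basis 3 $$ (1,1) = -1"
  by (simp_all add: pauli_basis_def pauli_def mat_of_rows_list_def)

lemma pauli_basis_hermitian:
  assumes "m < 4" shows "mat_adjoint (pauli_basis m) = pauli_basis m"
proof (rule eq_matI)
  fix i j assume "i < dim_row (pauli_basis m)" "j < dim_col (pauli_basis m)"
  then have "i < 2" "j < 2" by auto
  then show "mat_adjoint (pauli_basis m) $$ (i, j) = pauli_basis m $$ (i, j)"
    using assms unfolding nat_less_2_iff nat_less_4_iff
    by (elim disjE) (simp_all add: index_mat_adjoint pauli_basis_entries[unfolded One_nat_def])
qed auto

definition tensor_coeff :: "complex mat \<Rightarrow> complex mat \<Rightarrow> complex mat \<Rightarrow> complex" where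
  "tensor_coeff M X Y = ctrace (M * (X \<otimes>\<^sub>k Y))"

lemma tensor_coeff_expand:
  assumes "M \<in> carrier_mat 4 4" "X \<in> carrier_mat 2 2" "Y \<in> carrier_mat 2 2"
  shows "tensor_coeff M X Y =
    M$$(0,0)*X$$(0,0)*Y$$(0,0) + M$$(0,1)*X$$(0,0)*Y$$(1,0) + M$$(0,2)*X$$(1,0)*Y$$(0,0) + M$$(0,3)*X$$(1,0)*Y$$(1,0) +
    M$$(1,0)*X$$(0,0)*Y$$(0,1) + M$$(1,1)*X$$(0,0)*Y$$(1,1) + M$$(1,2)*X$$(1,0)*Y$$(0,1) + M$$(1,3)*X$$(1,0)*Y$$(1,1) +
    M$$(2,0)*X$$(0,1)*Y$$(0,0) + M$$(2,1)*X$$(0,1)*Y$$(1,0) + M$$(2,2)*X$$(1,1)*Y$$(0,0) + M$$(2,3)*X$$(1,1)*Y$$(1,0) +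
    M$$(3,0)*X$$(0,1)*Y$$(0,1) + M$$(3,1)*X$$(0,1)*Y$$(1,1) + M$$(3,2)*X$$(1,1)*Y$$(0,1) + M$$(3,3)*X$$(1,1)*Y$$(1,1)"
proof -
  have "dim_row X = 2" "dim_col X = 2" "dim_row Y = 2" "dim_col Y = 2" using assms by auto
  then show ?thesis unfolding tensor_coeff_def
    using assms by (subst ctrace_mult[of _ 4 4]) (auto simp: sum_lessThan_4 algebra_simps)
qed

lemma tensor_coeff_add_left:
  "M \<in> carrier_mat 4 4 \<Longrightarrow> X1 \<in> carrier_mat 2 2 \<Longrightarrow> X2 \<in> carrier_mat 2 2 \<Longrightarrow> Y \<in> carrier_mat 2 2 \<Longrightarrow>
   tensor_coeff M (X1 + X2) Y = tensor_coeff M X1 Y + tensor_coeff M X2 Y"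
  by (simp add: tensor_coeff_expand algebra_simps)

lemma tensor_coeff_add_right:
  "M \<in> carrier_mat 4 4 \<Longrightarrow> X \<in> carrier_mat 2 2 \<Longrightarrow> Y1 \<in> carrier_mat 2 2 \<Longrightarrow> Y2 \<in> carrier_mat 2 2 \<Longrightarrow>
   tensor_coeff M X (Y1 + Y2) = tensor_coeff M X Y1 + tensor_coeff M X Y2"
  by (simp add: tensor_coeff_expand algebra_simps)

lemma tensor_coeff_smult_left:
  "M \<in> carrier_mat 4 4 \<Longrightarrow> X \<in> carrier_mat 2 2 \<Longrightarrow> Y \<in> carrier_mat 2 2 \<Longrightarrow>
   tensor_coeff M (c \<cdot>\<^sub>m X) Y = c * tensor_coeff M X Y"
  by (simp add: tensor_coeff_expand algebra_simps)

lemma tensor_coeff_smult_right: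
  "M \<in> carrier_mat 4 4 \<Longrightarrow> X \<in> carrier_mat 2 2 \<Longrightarrow> Y \<in> carrier_mat 2 2 \<Longrightarrow>
   tensor_coeff M X (c \<cdot>\<^sub>m Y) = c * tensor_coeff M X Y"
  by (simp add: tensor_coeff_expand algebra_simps)

lemma tensor_coeff_diff:
  assumes "A \<in> carrier_mat 4 4" "B \<in> carrier_mat 4 4" "X \<in> carrier_mat 2 2" "Y \<in> carrier_mat 2 2"
  shows "tensor_coeff (A - B) X Y = tensor_coeff A X Y - tensor_coeff B X Y"
proof -
  have "(A - B) * (X \<otimes>\<^sub>k Y) = A * (X \<otimes>\<^sub>k Y) - B * (X \<otimes>\<^sub>k Y)"
    using assms by (intro minus_mult_distrib_mat[of _ 4 4 _ _ 4]) auto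
  then show ?thesis unfolding tensor_coeff_def using assms by (simp add: ctrace_diff[of _ 4])
qed

lemma tensor_coeff_hermitian_real:
  assumes "M \<in> carrier_mat 4 4" "mat_adjoint M = M" "m < 4" "n < 4"
  shows "tensor_coeff M (pauli_basis m) (pauli_basis n)
           = complex_of_real (Re (tensor_coeff M (pauli_basis m) (pauli_basis n)))"
proof -
  have "mat_adjoint (pauli_basis m \<otimes>\<^sub>k pauli_basis n) = pauli_basis m \<otimes>\<^sub>k pauli_basis n"
    using assms by (simp add: mat_adjoint_tensor pauli_basis_hermitian)
  then have "cnj (tensor_coeff M (pauli_basis m) (pauli_basis n)) = tensor_coeff M (pauli_basis m) (pauli_basis n)"
    unfolding tensor_coeff_def using assms by (intro ctrace_mult_hermitian_real[of _ 4]) auto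
  then show ?thesis by (simp add: complex_eq_iff)
qed

lemma cmod_sq_sign_sums:
  "(cmod (p+q+r+s))^2 + (cmod (p-q+r-s))^2 + (cmod (p+q-r-s))^2 + (cmod (p-q-r+s))^2
     = 4 * ((cmod p)^2 + (cmod q)^2 + (cmod r)^2 + (cmod s)^2)"
  unfolding cmod_power2 by (simp add: power2_eq_square algebra_simps)

text \<open>Each of the four coefficient groups below involves only one quadruple of entries of \<open>M\<close>, with
  the four sign patterns of \<open>cmod_sq_sign_sums\<close>.\<close>

lemma hs_norm_sq_pauli_expansion:
  assumes M: "M \<in> carrier_mat 4 4"
  shows "Re (ctrace (M * mat_adjoint M))
           = 1/4 * (\<Sum>a<4. \<Sum>b<4. (cmod (tensor_coeff M (pauli_basis a) (pauli_basis b)))^2)"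
proof -
  have "ctrace (M * mat_adjoint M) = (\<Sum>i<4. \<Sum>j<4. M$$(i,j) * cnj (M$$(i,j)))"
    using M by (simp add: ctrace_mult index_mat_adjoint)
  then have entries: "Re (ctrace (M * mat_adjoint M)) = (\<Sum>i<4. \<Sum>j<4. (cmod (M$$(i,j)))^2)"
    by (simp add: Re_sum flip: complex_norm_square)
  have coeffs:
     "tensor_coeff M (pauli_basis 0) (pauli_basis 0) = M$$(0,0) + M$$(1,1) + M$$(2,2) + M$$(3,3)"
     "tensor_coeff M (pauli_basis 0) (pauli_basis 3) = M$$(0,0) - M$$(1,1) + M$$(2,2) - M$$(3,3)"
     "tensor_coeff M (pauli_basis 3) (pauli_basis 0) = M$$(0,0) + M$$(1,1) - M$$(2,2) - M$$(3,3)"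
     "tensor_coeff M (pauli_basis 3) (pauli_basis 3) = M$$(0,0) - M$$(1,1) - M$$(2,2) + M$$(3,3)"
     "tensor_coeff M (pauli_basis 0) (pauli_basis 1) = M$$(0,1) + M$$(1,0) + M$$(2,3) + M$$(3,2)"
     "tensor_coeff M (pauli_basis 0) (pauli_basis 2) = \<i> * (M$$(0,1) - M$$(1,0) + M$$(2,3) - M$$(3,2))"
     "tensor_coeff M (pauli_basis 3) (pauli_basis 1) = M$$(0,1) + M$$(1,0) - M$$(2,3) - M$$(3,2)"
     "tensor_coeff M (pauli_basis 3) (pauli_basis 2) = \<i> * (M$$(0,1) - M$$(1,0) - M$$(2,3) + M$$(3,2))"
     "tensor_coeff M (pauli_basis 1) (pauli_basis 0) = M$$(0,2) + M$$(1,3) + M$$(2,0) + M$$(3,1)"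
     "tensor_coeff M (pauli_basis 1) (pauli_basis 3) = M$$(0,2) - M$$(1,3) + M$$(2,0) - M$$(3,1)"
     "tensor_coeff M (pauli_basis 2) (pauli_basis 0) = \<i> * (M$$(0,2) + M$$(1,3) - M$$(2,0) - M$$(3,1))"
     "tensor_coeff M (pauli_basis 2) (pauli_basis 3) = \<i> * (M$$(0,2) - M$$(1,3) - M$$(2,0) + M$$(3,1))"
     "tensor_coeff M (pauli_basis 1) (pauli_basis 1) = M$$(0,3) + M$$(1,2) + M$$(2,1) + M$$(3,0)"
     "tensor_coeff M (pauli_basis 1) (pauli_basis 2) = \<i> * (M$$(0,3) - M$$(1,2) + M$$(2,1) - M$$(3,0))"
     "tensor_coeff M (pauli_basis 2) (pauli_basis 1) = \<i> * (M$$(0,3) + M$$(1,2) - M$$(2,1) - M$$(3,0))"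
     "tensor_coeff M (pauli_basis 2) (pauli_basis 2) = - (M$$(0,3) - M$$(1,2) - M$$(2,1) + M$$(3,0))"
    using M by (simp_all only: tensor_coeff_expand pauli_basis_carrier pauli_basis_entries)
      (simp_all add: algebra_simps)
  show ?thesis
    unfolding entries
    apply (simp only: sum_lessThan_4 coeffs norm_mult norm_ii norm_minus_cancel mult_1_left)
    using cmod_sq_sign_sums[of "M$$(0,0)" "M$$(1,1)" "M$$(2,2)" "M$$(3,3)"]
      cmod_sq_sign_sums[of "M$$(0,1)" "M$$(1,0)" "M$$(2,3)" "M$$(3,2)"]
      cmod_sq_sign_sums[of "M$$(0,2)" "M$$(1,3)" "M$$(2,0)" "M$$(3,1)"]
      cmod_sq_sign_sums[of "M$$(0,3)" "M$$(1,2)" "M$$(2,1)" "M$$(3,0)"]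
    by argo
qed

lemma hs_dist_sq_pauli_expansion:
  assumes "A \<in> carrier_mat 4 4" "B \<in> carrier_mat 4 4"
  shows "(hs_dist A B)^2
           = 1/4 * (\<Sum>a<4. \<Sum>b<4. (cmod (tensor_coeff (A - B) (pauli_basis a) (pauli_basis b)))^2)"
proof -
  have "A - B \<in> carrier_mat 4 4" using assms(2) by (rule minus_carrier_mat)
  note expansion = hs_norm_sq_pauli_expansion[OF this]
  have "0 \<le> Re (ctrace ((A - B) * mat_adjoint (A - B)))"
    unfolding expansion by (intro mult_nonneg_nonneg sum_nonneg) auto
  then show ?thesis unfolding hs_dist_def expansion by simp
qed

section \<open>Local projective measurements as dephasing\<close>

lemma bloch_op_dim [simp]: "dim_row (bloch_op k) = 2" "dim_col (bloch_op k) = 2"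
  by (simp_all add: bloch_op_def)

lemma bloch_op_carrier [simp]: "bloch_op k \<in> carrier_mat 2 2"
  by (simp add: bloch_op_def)

lemma proj_dim [simp]: "dim_row (proj k s) = 2" "dim_col (proj k s) = 2"
  by (simp_all add: proj_def)

lemma proj_carrier [simp]: "proj k s \<in> carrier_mat 2 2"
  by (simp add: proj_def)

lemma bloch_op_entries:
  "bloch_op k $$ (0,0) = of_real (k$2)"
  "bloch_op k $$ (0,1) = of_real (k$0) - \<i> * of_real (k$1)"
  "bloch_op k $$ (1,0) = of_real (k$0) + \<i> * of_real (k$1)"
  "bloch_op k $$ (1,1) = - of_real (k$2)"
  by (simp_all add: bloch_op_def pauli_def mat_of_rows_list_def)

lemma proj_entries:
  "proj k s $$ (0,0) = (1 + of_real s * of_real (k$2)) / 2"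
  "proj k s $$ (0,1) = of_real s * (of_real (k$0) - \<i> * of_real (k$1)) / 2"
  "proj k s $$ (1,0) = of_real s * (of_real (k$0) + \<i> * of_real (k$1)) / 2"
  "proj k s $$ (1,1) = (1 - of_real s * of_real (k$2)) / 2"
  by (simp_all add: proj_def bloch_op_entries[unfolded One_nat_def])

lemma unit3_sum_sq: "unit3 k \<Longrightarrow> (k$0)^2 + (k$1)^2 + (k$2)^2 = 1"
  by (simp add: unit3_def sum_lessThan_3)

definition dephase :: "real vec \<Rightarrow> complex mat \<Rightarrow> complex mat" where
  "dephase k X = proj k 1 * X * proj k 1 + proj k (-1) * X * proj k (-1)"

lemma dephase_dim [simp]: "dim_row (dephase k X) = 2" "dim_col (dephase k X) = 2"
  by (simp_all add: dephase_def)

lemma dephase_carrier [simp]: "dephase k X \<in> carrier_mat 2 2"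
  by (simp add: carrier_matI)

lemma index_dephase:
  assumes "X \<in> carrier_mat 2 2" "i < 2" "j < 2"
  shows "dephase k X $$ (i,j) = (\<Sum>a<2. \<Sum>b<2. proj k 1 $$ (i,a) * X $$ (a,b) * proj k 1 $$ (b,j)
     + proj k (-1) $$ (i,a) * X $$ (a,b) * proj k (-1) $$ (b,j))"
  using assms by (simp add: dephase_def scalar_prod_def atLeast0LessThan sum_lessThan_2 algebra_simps)

lemma dephase_one:
  assumes "unit3 k" shows "dephase k (1\<^sub>m 2) = 1\<^sub>m 2"
proof (rule eq_matI)
  fix i j assume "i < dim_row (1\<^sub>m 2 :: complex mat)" "j < dim_col (1\<^sub>m 2 :: complex mat)"
  then have "i < 2" "j < 2" by auto
  then show "dephase k (1\<^sub>m 2) $$ (i,j) = 1\<^sub>m 2 $$ (i,j)"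
    unfolding nat_less_2_iff
    using unit3_sum_sq[OF assms]
    by (elim disjE) (simp_all add: index_dephase sum_lessThan_2 proj_entries[unfolded One_nat_def]
        complex_eq_iff power2_eq_square field_simps)
qed auto

lemma dephase_pauli:
  assumes "unit3 k" "a < 3"
  shows "dephase k (pauli a) = complex_of_real (k$a) \<cdot>\<^sub>m bloch_op k"
proof (rule eq_matI)
  fix i j assume "i < dim_row (complex_of_real (k$a) \<cdot>\<^sub>m bloch_op k)"
    "j < dim_col (complex_of_real (k$a) \<cdot>\<^sub>m bloch_op k)"
  then have "i < 2" "j < 2" by auto
  moreover have "a = 0 \<or> a = 1 \<or> a = 2" using assms(2) by auto
  ultimately show "dephase k (pauli a) $$ (i,j) = (complex_of_real (k$a) \<cdot>\<^sub>m bloch_op k) $$ (i,j)"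
    unfolding nat_less_2_iff
    using unit3_sum_sq[OF assms(1)]
    by (elim disjE) (simp_all add: index_dephase sum_lessThan_2 proj_entries[unfolded One_nat_def]
        bloch_op_entries[unfolded One_nat_def] pauli_entries[unfolded One_nat_def]
        complex_eq_iff power2_eq_square field_simps)
qed auto

lemma chi_carrier [simp]: "R \<in> carrier_mat 4 4 \<Longrightarrow> chi R k l \<in> carrier_mat 4 4"
  unfolding chi_def Let_def by (intro add_carrier_mat mult_carrier_mat[of _ 4 4] tensor_carrier proj_carrier) auto

lemma ctrace_sandwich_tensor:
  assumes R: "R \<in> carrier_mat 4 4" and X: "X \<in> carrier_mat 2 2" and Y: "Y \<in> carrier_mat 2 2"
  shows "ctrace ((proj k s \<otimes>\<^sub>k proj l t) * R * (proj k s \<otimes>\<^sub>k proj l t) * (X \<otimes>\<^sub>k Y))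
     = tensor_coeff R (proj k s * X * proj k s) (proj l t * Y * proj l t)"
proof -
  let ?P = "proj k s \<otimes>\<^sub>k proj l t"
  have "?P * (X \<otimes>\<^sub>k Y) * ?P = (proj k s * X * proj k s) \<otimes>\<^sub>k (proj l t * Y * proj l t)"
    using X Y by (simp add: tensor_mult)
  moreover have "ctrace (?P * R * ?P * (X \<otimes>\<^sub>k Y)) = ctrace (R * (?P * (X \<otimes>\<^sub>k Y) * ?P))"
    using R X Y by (intro ctrace_sandwich) auto
  ultimately show ?thesis unfolding tensor_coeff_def by simp
qed

lemma tensor_coeff_chi:
  assumes R: "R \<in> carrier_mat 4 4" and X: "X \<in> carrier_mat 2 2" and Y: "Y \<in> carrier_mat 2 2"
  shows "tensor_coeff (chi R k l) X Y = tensor_coeff R (dephase k X) (dephase l Y)"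
proof -
  let ?P = "\<lambda>s t. proj k s \<otimes>\<^sub>k proj l t"
  let ?T = "\<lambda>s t. ?P s t * R * ?P s t"
  let ?B = "X \<otimes>\<^sub>k Y"
  have T: "?T s t \<in> carrier_mat 4 4" for s t using R by (intro mult_carrier_mat[of _ 4 4]) auto
  have B: "?B \<in> carrier_mat 4 4" using X Y by simp
  have "chi R k l * ?B = ?T 1 1 * ?B + ?T 1 (-1) * ?B + ?T (-1) 1 * ?B + ?T (-1) (-1) * ?B"
    unfolding chi_def Let_def using T B by (simp add: add_mult_distrib_mat[of _ 4 4])
  then have "tensor_coeff (chi R k l) X Y
      = ctrace (?T 1 1 * ?B) + ctrace (?T 1 (-1) * ?B) + ctrace (?T (-1) 1 * ?B) + ctrace (?T (-1) (-1) * ?B)"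
    unfolding tensor_coeff_def using T B by (simp add: ctrace_add[of _ 4])
  also have "\<dots> = tensor_coeff R (dephase k X) (dephase l Y)"
    unfolding ctrace_sandwich_tensor[OF R X Y] dephase_def using R X Y
    by (simp add: tensor_coeff_add_left tensor_coeff_add_right)
  finally show ?thesis .
qed

lemma sum_sq_diff_projection:
  fixes u y :: "'a \<Rightarrow> real"
  assumes "(\<Sum>i\<in>I. (u i)^2) = 1"
  shows "(\<Sum>i\<in>I. (y i - u i * (\<Sum>j\<in>I. u j * y j))^2) = (\<Sum>i\<in>I. (y i)^2) - (\<Sum>j\<in>I. u j * y j)^2"
proof -
  define s where "s = (\<Sum>j\<in>I. u j * y j)"
  have "(\<Sum>i\<in>I. (y i - u i * s)^2) = (\<Sum>i\<in>I. (y i)^2 - 2 * s * (u i * y i) + s^2 * (u i)^2)"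
    by (intro sum.cong refl) (simp add: power2_eq_square algebra_simps)
  also have "\<dots> = (\<Sum>i\<in>I. (y i)^2) - 2 * s * s + s^2"
    by (simp add: sum.distrib sum_subtractf assms flip: sum_distrib_left s_def)
  finally show ?thesis by (simp add: s_def power2_eq_square)
qed

lemma sum_sq_diff_rank_one_projection:
  fixes k :: "'a \<Rightarrow> real" and l :: "'b \<Rightarrow> real"
  assumes "(\<Sum>i\<in>I. (k i)^2) = 1" "(\<Sum>j\<in>J. (l j)^2) = 1"
  shows "(\<Sum>i\<in>I. \<Sum>j\<in>J. (T i j - k i * l j * (\<Sum>i\<in>I. \<Sum>j\<in>J. k i * T i j * l j))^2)
           = (\<Sum>i\<in>I. \<Sum>j\<in>J. (T i j)^2) - (\<Sum>i\<in>I. \<Sum>j\<in>J. k i * T i j * l j)^2"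
proof -
  have "(\<Sum>p\<in>I \<times> J. ((\<lambda>(i, j). k i * l j) p)^2) = 1"
    using assms by (simp add: sum.cartesian_product' power_mult_distrib flip: sum_product)
  from sum_sq_diff_projection[OF this, of "\<lambda>(i, j). T i j"] show ?thesis
    by (simp add: sum.cartesian_product' mult.commute mult.left_commute)
qed

lemma state_tensor_coeffs:
  assumes "two_qubit_state \<rho>"
  shows "tensor_coeff \<rho> (1\<^sub>m 2) (1\<^sub>m 2) = 1"
    and "i < 3 \<Longrightarrow> tensor_coeff \<rho> (pauli i) (1\<^sub>m 2) = of_real (loc_x \<rho> i)"
    and "j < 3 \<Longrightarrow> tensor_coeff \<rho> (1\<^sub>m 2) (pauli j) = of_real (loc_y \<rho> j)"
    and "i < 3 \<Longrightarrow> j < 3 \<Longrightarrow> tensor_coeff \<rho> (pauli i) (pauli j) = of_real (corr \<rho> i j)"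
proof -
  have R: "\<rho> \<in> carrier_mat 4 4" and H: "mat_adjoint \<rho> = \<rho>" and tr: "ctrace \<rho> = 1"
    using assms unfolding two_qubit_state_def by auto
  note real = tensor_coeff_hermitian_real[OF R H]
  show "tensor_coeff \<rho> (1\<^sub>m 2) (1\<^sub>m 2) = 1"
    unfolding tensor_coeff_def one_tensor_one using R tr by simp
  show "i < 3 \<Longrightarrow> tensor_coeff \<rho> (pauli i) (1\<^sub>m 2) = of_real (loc_x \<rho> i)"
    using real[of "Suc i" 0] by (simp add: pauli_basis_def loc_x_def tensor_coeff_def)
  show "j < 3 \<Longrightarrow> tensor_coeff \<rho> (1\<^sub>m 2) (pauli j) = of_real (loc_y \<rho> j)"
    using real[of 0 "Suc j"] by (simp add: pauli_basis_def loc_y_def tensor_coeff_def)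
  show "i < 3 \<Longrightarrow> j < 3 \<Longrightarrow> tensor_coeff \<rho> (pauli i) (pauli j) = of_real (corr \<rho> i j)"
    using real[of "Suc i" "Suc j"] by (simp add: pauli_basis_def corr_def tensor_coeff_def)
qed

lemma tensor_coeff_bloch_op_left:
  "R \<in> carrier_mat 4 4 \<Longrightarrow> Y \<in> carrier_mat 2 2 \<Longrightarrow>
   tensor_coeff R (bloch_op k) Y = (\<Sum>i<3. of_real (k$i) * tensor_coeff R (pauli i) Y)"
  unfolding bloch_op_def by (simp add: sum_lessThan_3 tensor_coeff_add_left tensor_coeff_smult_left)

lemma tensor_coeff_bloch_op_right:
  "R \<in> carrier_mat 4 4 \<Longrightarrow> X \<in> carrier_mat 2 2 \<Longrightarrow>
   tensor_coeff R X (bloch_op l) = (\<Sum>j<3. of_real (l$j) * tensor_coeff R X (pauli j))"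
  unfolding bloch_op_def by (simp add: sum_lessThan_3 tensor_coeff_add_right tensor_coeff_smult_right)

lemma residual_tensor_coeffs:
  assumes st: "two_qubit_state \<rho>" and k: "unit3 k" and l: "unit3 l"
  defines "M \<equiv> \<rho> - chi \<rho> k l"
  shows "tensor_coeff M (pauli_basis 0) (pauli_basis 0) = 0"
    and "a < 3 \<Longrightarrow> tensor_coeff M (pauli_basis (Suc a)) (pauli_basis 0)
           = of_real (loc_x \<rho> a - k$a * (\<Sum>i<3. k$i * loc_x \<rho> i))"
    and "b < 3 \<Longrightarrow> tensor_coeff M (pauli_basis 0) (pauli_basis (Suc b))
           = of_real (loc_y \<rho> b - l$b * (\<Sum>j<3. l$j * loc_y \<rho> j))"
    and "a < 3 \<Longrightarrow> b < 3 \<Longrightarrow> tensor_coeff M (pauli_basis (Suc a)) (pauli_basis (Suc b))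
           = of_real (corr \<rho> a b - k$a * l$b * (\<Sum>i<3. \<Sum>j<3. k$i * corr \<rho> i j * l$j))"
proof -
  have R: "\<rho> \<in> carrier_mat 4 4" using st by (simp add: two_qubit_state_def)
  have M: "tensor_coeff M X Y = tensor_coeff \<rho> X Y - tensor_coeff \<rho> (dephase k X) (dephase l Y)"
    if "X \<in> carrier_mat 2 2" "Y \<in> carrier_mat 2 2" for X Y
    unfolding M_def using R that by (simp add: tensor_coeff_diff tensor_coeff_chi)
  note data = state_tensor_coeffs[OF st]
  have basis: "pauli_basis 0 = 1\<^sub>m 2" "pauli_basis (Suc a) = pauli a" for a
    by (simp_all add: pauli_basis_def)
  note dephase = dephase_one[OF k] dephase_one[OF l] dephase_pauli[OF k] dephase_pauli[OF l]
  note expand = tensor_coeff_smult_left tensor_coeff_smult_right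
    tensor_coeff_bloch_op_left tensor_coeff_bloch_op_right
  show "tensor_coeff M (pauli_basis 0) (pauli_basis 0) = 0"
    by (simp add: M basis dephase data)
  show "a < 3 \<Longrightarrow> tensor_coeff M (pauli_basis (Suc a)) (pauli_basis 0)
          = of_real (loc_x \<rho> a - k$a * (\<Sum>i<3. k$i * loc_x \<rho> i))"
    using R by (simp add: M basis dephase expand data sum_lessThan_3)
  show "b < 3 \<Longrightarrow> tensor_coeff M (pauli_basis 0) (pauli_basis (Suc b))
          = of_real (loc_y \<rho> b - l$b * (\<Sum>j<3. l$j * loc_y \<rho> j))"
    using R by (simp add: M basis dephase expand data sum_lessThan_3)
  show "a < 3 \<Longrightarrow> b < 3 \<Longrightarrow> tensor_coeff M (pauli_basis (Suc a)) (pauli_basis (Suc b))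
          = of_real (corr \<rho> a b - k$a * l$b * (\<Sum>i<3. \<Sum>j<3. k$i * corr \<rho> i j * l$j))"
    using R by (simp add: M basis dephase expand data sum_lessThan_3 algebra_simps)
qed

theorem hs_dist_chi_sq:
  assumes st: "two_qubit_state \<rho>" and k: "unit3 k" and l: "unit3 l"
  shows "(hs_dist \<rho> (chi \<rho> k l))^2 = 1/4 *
     (((\<Sum>i<3. (loc_x \<rho> i)^2) - (\<Sum>i<3. k$i * loc_x \<rho> i)^2)
    + ((\<Sum>j<3. (loc_y \<rho> j)^2) - (\<Sum>j<3. l$j * loc_y \<rho> j)^2)
    + ((\<Sum>i<3. \<Sum>j<3. (corr \<rho> i j)^2) - (\<Sum>i<3. \<Sum>j<3. k$i * corr \<rho> i j * l$j)^2))"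
proof -
  have R: "\<rho> \<in> carrier_mat 4 4" using st by (simp add: two_qubit_state_def)
  have unit: "(\<Sum>i<3. (k$i)^2) = 1" "(\<Sum>j<3. (l$j)^2) = 1" using k l by (simp_all add: unit3_def)
  note coeffs = residual_tensor_coeffs[OF st k l]
  have "(hs_dist \<rho> (chi \<rho> k l))^2 = 1/4 *
     ((\<Sum>a<3. (loc_x \<rho> a - k$a * (\<Sum>i<3. k$i * loc_x \<rho> i))^2)
    + (\<Sum>b<3. (loc_y \<rho> b - l$b * (\<Sum>j<3. l$j * loc_y \<rho> j))^2)
    + (\<Sum>a<3. \<Sum>b<3. (corr \<rho> a b - k$a * l$b * (\<Sum>i<3. \<Sum>j<3. k$i * corr \<rho> i j * l$j))^2))"
    unfolding hs_dist_sq_pauli_expansion[OF R chi_carrier[OF R]]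
    by (simp add: sum_lessThan_4_shift sum.distrib coeffs del: of_real_diff of_real_mult)
  then show ?thesis
    by (simp only: sum_sq_diff_projection[of "\<lambda>i. k$i"] sum_sq_diff_projection[of "\<lambda>j. l$j"]
        sum_sq_diff_rank_one_projection[of "\<lambda>i. k$i" _ "\<lambda>j. l$j"] unit)
qed

section \<open>The largest eigenvalue of a symmetric \<open>3 \<times> 3\<close> matrix as a maximum\<close>

definition sq_norm3 :: "(nat \<Rightarrow> real) \<Rightarrow> real" where
  "sq_norm3 v = (\<Sum>i<3. (v i)^2)"

definition inner3 :: "(nat \<Rightarrow> real) \<Rightarrow> (nat \<Rightarrow> real) \<Rightarrow> real" where
  "inner3 u w = (\<Sum>i<3. u i * w i)"

definition bilinear_form3 :: "real mat \<Rightarrow> (nat \<Rightarrow> real) \<Rightarrow> (nat \<Rightarrow> real) \<Rightarrow> real" where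
  "bilinear_form3 S u w = (\<Sum>i<3. \<Sum>j<3. u i * S$$(i,j) * w j)"

definition quad_form3 :: "real mat \<Rightarrow> (nat \<Rightarrow> real) \<Rightarrow> real" where
  "quad_form3 S v = bilinear_form3 S v v"

lemma sq_norm3_nonneg: "0 \<le> sq_norm3 v"
  unfolding sq_norm3_def by (simp add: sum_nonneg)

lemma sq_norm3_eq_0: "sq_norm3 v = 0 \<Longrightarrow> i < 3 \<Longrightarrow> v i = 0"
  unfolding sq_norm3_def by (simp add: sum_nonneg_eq_0_iff)

lemma sq_norm3_smult: "sq_norm3 (\<lambda>i. c * v i) = c^2 * sq_norm3 v"
  unfolding sq_norm3_def by (simp add: power_mult_distrib sum_distrib_left)

lemma quad_form3_smult: "quad_form3 S (\<lambda>i. c * v i) = c^2 * quad_form3 S v"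
  unfolding quad_form3_def bilinear_form3_def
  by (simp add: sum_distrib_left power2_eq_square algebra_simps)

lemma quad_form3_cong: "(\<And>i. i < 3 \<Longrightarrow> u i = v i) \<Longrightarrow> quad_form3 S u = quad_form3 S v"
  unfolding quad_form3_def bilinear_form3_def by simp

lemma sq_norm3_add_smult: "sq_norm3 (\<lambda>i. u i + t * w i) = sq_norm3 u + 2 * t * inner3 u w + t^2 * sq_norm3 w"
  unfolding sq_norm3_def inner3_def by (simp add: sum_lessThan_3 power2_eq_square algebra_simps)

lemma quad_form3_add_smult:
  assumes "\<forall>i<3. \<forall>j<3. S$$(i,j) = S$$(j,i)"
  shows "quad_form3 S (\<lambda>i. u i + t * w i)
           = quad_form3 S u + 2 * t * bilinear_form3 S u w + t^2 * quad_form3 S w"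
  using assms unfolding quad_form3_def bilinear_form3_def
  by (simp add: sum_lessThan_3 power2_eq_square algebra_simps)

lemma quad_form3_attains_max:
  "\<exists>u. sq_norm3 u = 1 \<and> (\<forall>v. sq_norm3 v = 1 \<longrightarrow> quad_form3 S v \<le> quad_form3 S u)"
proof -
  define to_fun :: "real \<times> real \<times> real \<Rightarrow> nat \<Rightarrow> real"
    where "to_fun p i = (if i = 0 then fst p else if i = 1 then fst (snd p) else snd (snd p))" for p i
  define K where "K = {p :: real \<times> real \<times> real. (fst p)^2 + (fst (snd p))^2 + (snd (snd p))^2 = 1}"
  have "closed K" unfolding K_def by (intro closed_Collect_eq continuous_intros)
  moreover have "K \<subseteq> cball 0 1"
  proof
    fix p assume "p \<in> K"
    moreover obtain a b c where "p = (a, b, c)" by (cases p) auto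
    ultimately have "a^2 + b^2 + c^2 = 1" unfolding K_def by simp
    moreover have "norm (a, b, c) = sqrt (a^2 + b^2 + c^2)" by (simp add: norm_Pair add.assoc)
    ultimately show "p \<in> cball 0 1" using \<open>p = (a, b, c)\<close> by (simp add: cball_def dist_norm)
  qed
  ultimately have "compact K" by (metis compact_cball compact_Int_closed inf.absorb_iff2)
  moreover have "(1, 0, 0) \<in> K" unfolding K_def by simp
  moreover have "continuous_on K (\<lambda>p. quad_form3 S (to_fun p))"
    unfolding quad_form3_def bilinear_form3_def to_fun_def by (simp add: sum_lessThan_3) (intro continuous_intros)
  ultimately obtain p where p: "p \<in> K" "\<forall>q\<in>K. quad_form3 S (to_fun q) \<le> quad_form3 S (to_fun p)"
    using continuous_attains_sup[of K] by blast
  have "quad_form3 S v \<le> quad_form3 S (to_fun p)" if "sq_norm3 v = 1" for v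
  proof -
    have "quad_form3 S v = quad_form3 S (to_fun (v 0, v 1, v 2))"
      by (rule quad_form3_cong) (auto simp: to_fun_def nat_less_3_iff)
    moreover have "(v 0, v 1, v 2) \<in> K" using that unfolding K_def sq_norm3_def by (simp add: sum_lessThan_3)
    ultimately show ?thesis using p(2) by simp
  qed
  moreover have "sq_norm3 (to_fun p) = 1" using p(1) unfolding K_def sq_norm3_def to_fun_def by (simp add: sum_lessThan_3)
  ultimately show ?thesis by blast
qed

lemma quad_form3_le_max:
  assumes u: "sq_norm3 u = 1" "\<forall>v. sq_norm3 v = 1 \<longrightarrow> quad_form3 S v \<le> quad_form3 S u"
  shows "quad_form3 S v \<le> quad_form3 S u * sq_norm3 v"
proof (cases "sq_norm3 v = 0")
  case True
  then have "quad_form3 S v = quad_form3 S (\<lambda>i. 0)" by (intro quad_form3_cong) (simp add: sq_norm3_eq_0)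
  then show ?thesis using True by (simp add: quad_form3_def bilinear_form3_def)
next
  case False
  define r where "r = sqrt (sq_norm3 v)"
  have r: "r > 0" "r^2 = sq_norm3 v" unfolding r_def using False sq_norm3_nonneg[of v] by auto
  have "sq_norm3 (\<lambda>i. (1/r) * v i) = 1"
    unfolding sq_norm3_smult using r False by (simp add: power_divide)
  then have "quad_form3 S (\<lambda>i. (1/r) * v i) \<le> quad_form3 S u" using u(2) by blast
  moreover have "0 < sq_norm3 v" using r by (metis zero_less_power)
  ultimately show ?thesis unfolding quad_form3_smult using r by (simp add: power_divide pos_divide_le_eq mult.commute)
qed

lemma linear_coeff_zero_if_quadratic_nonpos:
  fixes a b :: real
  assumes "\<And>t. a * t^2 + b * t \<le> 0"
  shows "b = 0"
proof (rule ccontr)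
  assume b: "b \<noteq> 0"
  define d where "d = \<bar>a\<bar> + 1"
  have d: "d > 0" "a + d > 0" unfolding d_def by auto
  have "a * (b/d)^2 + b * (b/d) = b^2 * (a + d) / d^2"
    using d by (simp add: field_simps power2_eq_square)
  also have "\<dots> > 0" using d b by (intro divide_pos_pos mult_pos_pos) auto
  finally show False using assms[of "b/d"] by simp
qed

text \<open>Lagrange's condition at a maximiser \<open>u\<close>: the first variation of
  \<open>quad_form3 S - quad_form3 S u \<cdot> sq_norm3\<close>, which is nonpositive everywhere, vanishes.\<close>

lemma bilinear_form3_max:
  assumes sym: "\<forall>i<3. \<forall>j<3. S$$(i,j) = S$$(j,i)"
    and u: "sq_norm3 u = 1" "\<forall>v. sq_norm3 v = 1 \<longrightarrow> quad_form3 S v \<le> quad_form3 S u"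
  shows "bilinear_form3 S u w = quad_form3 S u * inner3 u w"
proof -
  let ?M = "quad_form3 S u"
  have "(quad_form3 S w - ?M * sq_norm3 w) * t^2 + (2 * (bilinear_form3 S u w - ?M * inner3 u w)) * t \<le> 0"
    for t
  proof -
    have "quad_form3 S (\<lambda>i. u i + t * w i) \<le> ?M * sq_norm3 (\<lambda>i. u i + t * w i)"
      using quad_form3_le_max[OF u] by simp
    then show ?thesis
      unfolding quad_form3_add_smult[OF sym] sq_norm3_add_smult using u(1) by (simp add: algebra_simps)
  qed
  from linear_coeff_zero_if_quadratic_nonpos[OF this] show ?thesis by simp
qed

lemma finite_eigenvalues:
  fixes S :: "'a::field mat"
  assumes "S \<in> carrier_mat n n"
  shows "finite {mu. eigenvalue S mu}"
proof -
  have "char_poly S \<noteq> 0" using degree_monic_char_poly[OF assms] by auto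
  then show ?thesis using eigenvalue_root_char_poly[OF assms] poly_roots_finite by simp
qed

lemma max_quad_form3_eigenvalue:
  assumes S: "S \<in> carrier_mat 3 3" and sym: "\<forall>i<3. \<forall>j<3. S$$(i,j) = S$$(j,i)"
    and u: "sq_norm3 u = 1" "\<forall>v. sq_norm3 v = 1 \<longrightarrow> quad_form3 S v \<le> quad_form3 S u"
  shows "eigenvalue S (quad_form3 S u)"
proof -
  define v where "v = vec 3 u"
  have "(S *\<^sub>v v) $ i = quad_form3 S u * v $ i" if "i < 3" for i
  proof -
    define e where "e = (\<lambda>j. if j = i then 1 else (0::real))"
    have "(S *\<^sub>v v) $ i = (\<Sum>j<3. S$$(i,j) * u j)"
      using S that unfolding v_def by (simp add: scalar_prod_def atLeast0LessThan)
    also have "\<dots> = (\<Sum>j<3. u j * S$$(j,i))"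
      using sym that by (intro sum.cong refl) (simp add: mult.commute)
    also have "\<dots> = bilinear_form3 S u e"
      unfolding bilinear_form3_def e_def using that by (simp add: if_distrib sum.delta cong: if_cong)
    also have "\<dots> = quad_form3 S u * inner3 u e" by (rule bilinear_form3_max[OF sym u])
    also have "inner3 u e = v $ i"
      using that unfolding inner3_def e_def v_def by (simp add: if_distrib sum.delta cong: if_cong)
    finally show ?thesis .
  qed
  then have "S *\<^sub>v v = quad_form3 S u \<cdot>\<^sub>v v" using S unfolding v_def by (intro eq_vecI) auto
  moreover have "v \<noteq> 0\<^sub>v 3"
  proof
    assume "v = 0\<^sub>v 3"
    then have "sq_norm3 u = 0" unfolding sq_norm3_def v_def by (metis (lifting) index_vec index_zero_vec(1) lessThan_iff power_zero_numeral sum.neutral)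
    with u(1) show False by simp
  qed
  ultimately show ?thesis
    unfolding eigenvalue_def eigenvector_def using S by (intro exI[of _ v]) (simp add: v_def)
qed

lemma eigenvalue_le_max_quad_form3:
  assumes S: "S \<in> carrier_mat 3 3" and mu: "eigenvalue S mu"
    and u: "sq_norm3 u = 1" "\<forall>v. sq_norm3 v = 1 \<longrightarrow> quad_form3 S v \<le> quad_form3 S u"
  shows "mu \<le> quad_form3 S u"
proof -
  obtain x where x: "x \<in> carrier_vec 3" "x \<noteq> 0\<^sub>v 3" "S *\<^sub>v x = mu \<cdot>\<^sub>v x"
    using mu S unfolding eigenvalue_def eigenvector_def by auto
  define w where "w i = x $ i" for i
  have "quad_form3 S w = (\<Sum>i<3. w i * (S *\<^sub>v x) $ i)"
    using S x(1) unfolding quad_form3_def bilinear_form3_def w_def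
    by (simp add: scalar_prod_def atLeast0LessThan sum_distrib_left mult.assoc)
  also have "\<dots> = mu * sq_norm3 w"
    using x unfolding sq_norm3_def w_def by (simp add: sum_distrib_left power2_eq_square algebra_simps)
  finally have "mu * sq_norm3 w \<le> quad_form3 S u * sq_norm3 w"
    using quad_form3_le_max[OF u, of w] by simp
  moreover have "sq_norm3 w \<noteq> 0"
    using x(1,2) sq_norm3_eq_0[of w] unfolding w_def by (metis eq_vecI carrier_vecD index_zero_vec)
  ultimately show ?thesis using sq_norm3_nonneg[of w] by (simp add: mult_le_cancel_right)
qed

theorem largest_eigenvalue_max_quad_form3:
  assumes S: "S \<in> carrier_mat 3 3" and sym: "\<forall>i<3. \<forall>j<3. S$$(i,j) = S$$(j,i)"
  shows "\<forall>v. sq_norm3 v = 1 \<longrightarrow> quad_form3 S v \<le> largest_eigenvalue S"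
    and "\<exists>v. sq_norm3 v = 1 \<and> quad_form3 S v = largest_eigenvalue S"
proof -
  obtain u where u: "sq_norm3 u = 1" "\<forall>v. sq_norm3 v = 1 \<longrightarrow> quad_form3 S v \<le> quad_form3 S u"
    using quad_form3_attains_max by blast
  have "largest_eigenvalue S = quad_form3 S u"
    unfolding largest_eigenvalue_def
    using finite_eigenvalues[OF S] max_quad_form3_eigenvalue[OF S sym u]
      eigenvalue_le_max_quad_form3[OF S _ u]
    by (intro Max_eqI) auto
  then show "\<forall>v. sq_norm3 v = 1 \<longrightarrow> quad_form3 S v \<le> largest_eigenvalue S"
    and "\<exists>v. sq_norm3 v = 1 \<and> quad_form3 S v = largest_eigenvalue S"
    using u by auto
qed

section \<open>Optimising over the measurement directions\<close>

definition gram_plus_outer :: "(nat \<Rightarrow> nat \<Rightarrow> real) \<Rightarrow> (nat \<Rightarrow> real) \<Rightarrow> real mat" where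
  "gram_plus_outer T y = transpose_mat (mat 3 3 (\<lambda>(i, j). T i j)) * mat 3 3 (\<lambda>(i, j). T i j)
     + mat 3 3 (\<lambda>(i, j). y i * y j)"

lemma gram_plus_outer_carrier: "gram_plus_outer T y \<in> carrier_mat 3 3"
  by (simp add: gram_plus_outer_def)

lemma index_gram_plus_outer:
  "i < 3 \<Longrightarrow> j < 3 \<Longrightarrow> gram_plus_outer T y $$ (i, j) = (\<Sum>a<3. T a i * T a j) + y i * y j"
  by (simp add: gram_plus_outer_def scalar_prod_def atLeast0LessThan)

lemma gram_plus_outer_symmetric:
  "\<forall>i<3. \<forall>j<3. gram_plus_outer T y $$ (i, j) = gram_plus_outer T y $$ (j, i)"
  by (simp add: index_gram_plus_outer mult.commute)

lemma quad_form3_gram_plus_outer: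
  "quad_form3 (gram_plus_outer T y) v = sq_norm3 (\<lambda>a. \<Sum>j<3. T a j * v j) + (\<Sum>j<3. y j * v j)^2"
proof -
  have "quad_form3 (gram_plus_outer T y) v = (\<Sum>i<3. \<Sum>j<3. v i * ((\<Sum>a<3. T a i * T a j) + y i * y j) * v j)"
    unfolding quad_form3_def bilinear_form3_def by (simp add: index_gram_plus_outer)
  also have "\<dots> = sq_norm3 (\<lambda>a. \<Sum>j<3. T a j * v j) + (\<Sum>j<3. y j * v j)^2"
    unfolding sq_norm3_def by (simp add: sum_lessThan_3 power2_eq_square algebra_simps)
  finally show ?thesis .
qed

lemma inner_sq_le_sq_norm3: "unit3 k \<Longrightarrow> (\<Sum>i<3. k$i * w i)^2 \<le> sq_norm3 w"
  using Cauchy_Schwarz_ineq_sum[of "\<lambda>i. k$i" w "{..<3}"] by (simp add: unit3_def sq_norm3_def)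

lemma exists_unit3_inner_sq_eq: "\<exists>k. unit3 k \<and> (\<Sum>i<3. k$i * w i)^2 = sq_norm3 w"
proof (cases "sq_norm3 w = 0")
  case True
  then show ?thesis
    by (intro exI[of _ "unit_vec 3 0"]) (simp add: unit3_def sum_lessThan_3 sq_norm3_eq_0)
next
  case False
  define r where "r = sqrt (sq_norm3 w)"
  have r: "r > 0" "r^2 = sq_norm3 w" unfolding r_def using False sq_norm3_nonneg[of w] by auto
  define k where "k = vec 3 (\<lambda>i. w i / r)"
  have "(\<Sum>i<3. (k$i)^2) = sq_norm3 w / r^2"
    unfolding k_def sq_norm3_def by (simp add: power_divide sum_divide_distrib)
  then have "unit3 k" using r False unfolding unit3_def k_def by simp
  moreover have "(\<Sum>i<3. k$i * w i) = sq_norm3 w / r"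
    unfolding k_def sq_norm3_def by (simp add: power2_eq_square sum_divide_distrib)
  then have "(\<Sum>i<3. k$i * w i)^2 = sq_norm3 w"
    using r False by (simp add: power_divide power2_eq_square)
  ultimately show ?thesis by blast
qed

theorem projection_terms_max_eq_largest_eigenvalue:
  fixes T :: "nat \<Rightarrow> nat \<Rightarrow> real" and y :: "nat \<Rightarrow> real"
  defines "F \<equiv> \<lambda>k l. (\<Sum>j<3. l$j * y j)^2 + (\<Sum>i<3. \<Sum>j<3. k$i * T i j * l$j)^2"
  shows "unit3 k \<Longrightarrow> unit3 l \<Longrightarrow> F k l \<le> largest_eigenvalue (gram_plus_outer T y)"
    and "\<exists>k l. unit3 k \<and> unit3 l \<and> F k l = largest_eigenvalue (gram_plus_outer T y)"
proof -
  let ?L = "largest_eigenvalue (gram_plus_outer T y)"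
  note rayleigh = largest_eigenvalue_max_quad_form3[OF gram_plus_outer_carrier gram_plus_outer_symmetric]
  have F: "F k l = (\<Sum>i<3. k$i * (\<Sum>j<3. T i j * v j))^2 + (\<Sum>j<3. y j * v j)^2"
    if "\<And>j. j < 3 \<Longrightarrow> l$j = v j" for k l v
    unfolding F_def using that by (simp add: sum_distrib_left mult_ac)
  show "F k l \<le> ?L" if k: "unit3 k" and l: "unit3 l"
  proof -
    have "sq_norm3 (\<lambda>j. l$j) = 1" using l by (simp add: unit3_def sq_norm3_def)
    then have "quad_form3 (gram_plus_outer T y) (\<lambda>j. l$j) \<le> ?L" using rayleigh(1) by blast
    then show ?thesis
      unfolding F[of l "\<lambda>j. l$j", OF refl] quad_form3_gram_plus_outer
      using inner_sq_le_sq_norm3[OF k, of "\<lambda>i. \<Sum>j<3. T i j * l$j"] by linarith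
  qed
  obtain v where v: "sq_norm3 v = 1" "quad_form3 (gram_plus_outer T y) v = ?L"
    using rayleigh(2) by blast
  obtain k where k: "unit3 k" "(\<Sum>i<3. k$i * (\<Sum>j<3. T i j * v j))^2 = sq_norm3 (\<lambda>i. \<Sum>j<3. T i j * v j)"
    using exists_unit3_inner_sq_eq[of "\<lambda>i. \<Sum>j<3. T i j * v j"] by blast
  have "unit3 (vec 3 v)" using v(1) by (simp add: unit3_def sq_norm3_def)
  moreover have "F k (vec 3 v) = ?L"
    using F[of "vec 3 v" v k] k(2) v(2) by (simp add: quad_form3_gram_plus_outer)
  ultimately show "\<exists>k l. unit3 k \<and> unit3 l \<and> F k l = ?L" using k(1) by blast
qed

theorem mainTheorem3:
  fixes \<rho> :: "complex mat"
  assumes "two_qubit_state \<rho>"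
    and "\<forall>i<3. loc_x \<rho> i = 0"
  shows "geom_G \<rho> = 1/4 * ((\<Sum>j<3. (loc_y \<rho> j)^2) + (\<Sum>i<3. \<Sum>j<3. (corr \<rho> i j)^2)
           - largest_eigenvalue (transpose_mat (corr_mat \<rho>) * corr_mat \<rho> + Y_mat \<rho>))"
proof -
  let ?L = "largest_eigenvalue (transpose_mat (corr_mat \<rho>) * corr_mat \<rho> + Y_mat \<rho>)"
  let ?C = "(\<Sum>j<3. (loc_y \<rho> j)^2) + (\<Sum>i<3. \<Sum>j<3. (corr \<rho> i j)^2)"
  let ?F = "\<lambda>k l. (\<Sum>j<3. l$j * loc_y \<rho> j)^2 + (\<Sum>i<3. \<Sum>j<3. k$i * corr \<rho> i j * l$j)^2"
  have S: "transpose_mat (corr_mat \<rho>) * corr_mat \<rho> + Y_mat \<rho> = gram_plus_outer (corr \<rho>) (loc_y \<rho>)"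
    by (simp add: gram_plus_outer_def corr_mat_def Y_mat_def)
  have x: "(\<Sum>i<3. (loc_x \<rho> i)^2) = 0" "(\<Sum>i<3. k$i * loc_x \<rho> i) = 0" for k
    using assms(2) by simp_all
  have dist: "(hs_dist \<rho> (chi \<rho> k l))^2 = 1/4 * (?C - ?F k l)" if "unit3 k" "unit3 l" for k l
    using hs_dist_chi_sq[OF assms(1) that] by (simp add: x)
  note bound = projection_terms_max_eq_largest_eigenvalue(1)[where T = "corr \<rho>" and y = "loc_y \<rho>", folded S]
  obtain k l where kl: "unit3 k" "unit3 l" "?F k l = ?L"
    using projection_terms_max_eq_largest_eigenvalue(2)[where T = "corr \<rho>" and y = "loc_y \<rho>", folded S] by blast
  show ?thesis
    unfolding geom_G_def
  proof (rule cInf_eq_minimum)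
    show "1/4 * (?C - ?L) \<in> {(hs_dist \<rho> (chi \<rho> k l))^2 | k l. unit3 k \<and> unit3 l}"
      using dist[OF kl(1,2)] kl by force
    fix d assume "d \<in> {(hs_dist \<rho> (chi \<rho> k l))^2 | k l. unit3 k \<and> unit3 l}"
    then obtain k l where "unit3 k" "unit3 l" "d = (hs_dist \<rho> (chi \<rho> k l))^2" by blast
    then show "1/4 * (?C - ?L) \<le> d" using dist[of k l] bound[of k l] by simp
  qed
qed

end
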